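(* Let $G$ be a connected graph with $\gamma(G)\ge 2$. For any graph $H$, $$\mu_t(G\circ H)=n(G)\,(n(H)-1)+\mu_t(G).$$
   Context: All graphs are finite, simple and undirected; $n(G)$ denotes the order of $G$ and $\gamma(G)$ its domination number. The lexicographic product $G\circ H$ has vertex set $V(G)\times V(H)$, with $(x,y)$ adjacent to $(x',y')$ iff $xx'\in E(G)$, or $x=x'$ and $yy'\in E(H)$. Let $F$ be a connected graph and $X\subseteq V(F)$. Two vertices $x,y\in V(F)$ are $X$-visible if there exists a shortest $x,y$-path in $F$ none of whose internal vertices belongs to $X$. $X$ is a total mutual-visibility set of $F$ if every two vertices of $F$ are $X$-visible (the empty set is allowed). $\mu_t(F)$ is the maximum cardinality of a total mutual-visibility set of $F$. *)

theory Defs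
  imports Main
begin

definition graph :: "'a set \<Rightarrow> ('a \<Rightarrow> 'a \<Rightarrow> bool) \<Rightarrow> bool" where
  "graph V E \<longleftrightarrow> finite V \<and> V \<noteq> {} \<and>
     (\<forall>x y. E x y \<longrightarrow> x \<in> V \<and> y \<in> V) \<and>
     (\<forall>x y. E x y \<longrightarrow> E y x) \<and> (\<forall>x. \<not> E x x)"

definition walk :: "'a set \<Rightarrow> ('a \<Rightarrow> 'a \<Rightarrow> bool) \<Rightarrow> 'a list \<Rightarrow> bool" where
  "walk V E p \<longleftrightarrow> p \<noteq> [] \<and> set p \<subseteq> V \<and>
     (\<forall>i. Suc i < length p \<longrightarrow> E (p ! i) (p ! Suc i))"

definition connected_graph :: "'a set \<Rightarrow> ('a \<Rightarrow> 'a \<Rightarrow> bool) \<Rightarrow> bool" where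
  "connected_graph V E \<longleftrightarrow> graph V E \<and>
     (\<forall>x\<in>V. \<forall>y\<in>V. \<exists>p. walk V E p \<and> hd p = x \<and> last p = y)"

definition gdist :: "'a set \<Rightarrow> ('a \<Rightarrow> 'a \<Rightarrow> bool) \<Rightarrow> 'a \<Rightarrow> 'a \<Rightarrow> nat" where
  "gdist V E x y = (LEAST n. \<exists>p. walk V E p \<and> hd p = x \<and> last p = y \<and> length p = Suc n)"

definition shortest_path :: "'a set \<Rightarrow> ('a \<Rightarrow> 'a \<Rightarrow> bool) \<Rightarrow> 'a \<Rightarrow> 'a \<Rightarrow> 'a list \<Rightarrow> bool" where
  "shortest_path V E x y p \<longleftrightarrow> walk V E p \<and> hd p = x \<and> last p = y \<and>
     length p = Suc (gdist V E x y)"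

definition internal :: "'a list \<Rightarrow> 'a set" where
  "internal p = set (butlast (tl p))"

definition X_visible :: "'a set \<Rightarrow> ('a \<Rightarrow> 'a \<Rightarrow> bool) \<Rightarrow> 'a set \<Rightarrow> 'a \<Rightarrow> 'a \<Rightarrow> bool" where
  "X_visible V E X x y \<longleftrightarrow> (\<exists>p. shortest_path V E x y p \<and> internal p \<inter> X = {})"

definition total_mutual_visibility_set :: "'a set \<Rightarrow> ('a \<Rightarrow> 'a \<Rightarrow> bool) \<Rightarrow> 'a set \<Rightarrow> bool" where
  "total_mutual_visibility_set V E X \<longleftrightarrow> X \<subseteq> V \<and> (\<forall>x\<in>V. \<forall>y\<in>V. X_visible V E X x y)"

definition mu_t :: "'a set \<Rightarrow> ('a \<Rightarrow> 'a \<Rightarrow> bool) \<Rightarrow> nat" where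
  "mu_t V E = Max {card X | X. total_mutual_visibility_set V E X}"

definition dominating_set :: "'a set \<Rightarrow> ('a \<Rightarrow> 'a \<Rightarrow> bool) \<Rightarrow> 'a set \<Rightarrow> bool" where
  "dominating_set V E D \<longleftrightarrow> D \<subseteq> V \<and> (\<forall>v\<in>V. v \<in> D \<or> (\<exists>u\<in>D. E u v))"

definition domination_number :: "'a set \<Rightarrow> ('a \<Rightarrow> 'a \<Rightarrow> bool) \<Rightarrow> nat" where
  "domination_number V E = Min {card D | D. dominating_set V E D}"

definition lex_vertices :: "'a set \<Rightarrow> 'b set \<Rightarrow> ('a \<times> 'b) set" where
  "lex_vertices VG VH = VG \<times> VH"

definition lex_edges :: "('a \<Rightarrow> 'a \<Rightarrow> bool) \<Rightarrow> ('b \<Rightarrow> 'b \<Rightarrow> bool) \<Rightarrow> 'a \<times> 'b \<Rightarrow> 'a \<times> 'b \<Rightarrow> bool" where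
  "lex_edges EG EH u v \<longleftrightarrow> EG (fst u) (fst v) \<or> (fst u = fst v \<and> EH (snd u) (snd v))"

end

theory Submission
  imports Defs
begin

text \<open>
  Between different G-fibres, distances in G \<circ> H are the distances in G: a shortest G-path lifts
  to the product with arbitrary H-coordinates at its interior vertices, and a product walk projects
  to a G-walk that is no longer.
  Given a maximum total mutual-visibility set X of G and a vertex h0 of H, take all vertices of
  G \<circ> H outside the layer G \<times> {h0}, together with X \<times> {h0}; this set has the claimed size. Pairs in different fibres see each
  other along a lifted X-avoiding path through layer h0; non-adjacent pairs in a common fibre g
  see each other through (v, h0), where v is a neighbour of g outside X. Such a v exists because
  \<gamma>(G) \<ge> 2 gives a vertex z \<noteq> g not adjacent to g, and the second vertex of an X-avoiding
  shortest g,z-path is such a neighbour. Conversely, for any total mutual-visibility set S of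
  G \<circ> H, the vertices g whose whole fibre lies in S form a total mutual-visibility set of G,
  since shortest paths between different fibres project to shortest paths of G; every other fibre
  misses a vertex of S, which gives the matching upper bound.
\<close>

subsection \<open>Walks, distances and visibility\<close>

lemma walk_iff_successively: "walk V E p \<longleftrightarrow> p \<noteq> [] \<and> set p \<subseteq> V \<and> successively E p"
  by (simp add: walk_def successively_conv_nth)

lemma gdist_less_length:
  assumes "walk V E p" "hd p = x" "last p = y"
  shows "gdist V E x y < length p"
proof -
  have "length p = Suc (length p - 1)" using assms(1) by (cases p) (auto simp: walk_def)
  then have "gdist V E x y \<le> length p - 1"
    unfolding gdist_def using assms by (intro Least_le) metis
  then show ?thesis using assms(1) by (cases p) (auto simp: walk_def)
qed

lemma shortest_path_exists:
  assumes "walk V E p" "hd p = x" "last p = y"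
  obtains q where "shortest_path V E x y q"
proof -
  have "\<exists>n p. walk V E p \<and> hd p = x \<and> last p = y \<and> length p = Suc n"
    using assms by (intro exI[of _ "length p - 1"] exI[of _ p]) (auto simp: walk_def)
  from LeastI_ex[OF this] show ?thesis
    using that unfolding shortest_path_def gdist_def by blast
qed

lemma shortest_pathI:
  assumes "walk V E p" "hd p = x" "last p = y" "length p \<le> Suc (gdist V E x y)"
  shows "shortest_path V E x y p"
  using gdist_less_length[OF assms(1-3)] assms unfolding shortest_path_def by simp

lemma gdist_pos:
  assumes "walk V E p" "hd p = x" "last p = y" "x \<noteq> y"
  shows "0 < gdist V E x y"
proof (rule ccontr)
  assume "\<not> ?thesis"
  obtain q where "shortest_path V E x y q" using shortest_path_exists[OF assms(1-3)] .
  with \<open>\<not> ?thesis\<close> have "length q = 1" "hd q = x" "last q = y" by (auto simp: shortest_path_def)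
  then show False using assms(4) by (cases q) auto
qed

lemma gdist_ge_2:
  assumes "walk V E p" "hd p = x" "last p = y" "x \<noteq> y" "\<not> E x y"
  shows "2 \<le> gdist V E x y"
proof (rule ccontr)
  assume "\<not> ?thesis"
  with gdist_pos[OF assms(1-4)] have "gdist V E x y = 1" by simp
  moreover obtain q where "shortest_path V E x y q" using shortest_path_exists[OF assms(1-3)] .
  ultimately have "length q = 2" "hd q = x" "last q = y" "walk V E q"
    by (auto simp: shortest_path_def)
  then obtain a b where "q = [a, b]" by (cases q; cases "tl q") auto
  then show False using assms(5) \<open>walk V E q\<close> \<open>hd q = x\<close> \<open>last q = y\<close> by (auto simp: walk_def)
qed

lemma internal_map: "internal (map f p) = f ` internal p"
  by (simp add: internal_def map_butlast[symmetric] map_tl[symmetric])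

lemma internal_subset_set: "internal p \<subseteq> set p"
  by (cases p) (auto simp: internal_def dest: in_set_butlastD)

lemma internal_conv_nth: "internal p = {p ! i | i. 0 < i \<and> Suc i < length p}"
proof -
  have "x \<in> set (butlast (tl p)) \<longleftrightarrow> (\<exists>i. x = p ! i \<and> 0 < i \<and> Suc i < length p)" for x
  proof
    assume "x \<in> set (butlast (tl p))"
    then obtain j where "j < length (butlast (tl p))" "x = butlast (tl p) ! j"
      by (metis in_set_conv_nth)
    then show "\<exists>i. x = p ! i \<and> 0 < i \<and> Suc i < length p"
      by (intro exI[of _ "Suc j"]) (auto simp: nth_butlast nth_tl)
  next
    assume "\<exists>i. x = p ! i \<and> 0 < i \<and> Suc i < length p"
    then obtain i where "x = p ! i" "0 < i" "Suc i < length p" by blast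
    then have "butlast (tl p) ! (i - 1) = x" "i - 1 < length (butlast (tl p))"
      by (auto simp: nth_butlast nth_tl)
    then show "x \<in> set (butlast (tl p))" by (metis nth_mem)
  qed
  then show ?thesis unfolding internal_def by blast
qed

lemma X_visible_refl:
  assumes "x \<in> V"
  shows "X_visible V E X x x"
proof -
  have "shortest_path V E x x [x]" using assms by (intro shortest_pathI) (auto simp: walk_def)
  then show ?thesis unfolding X_visible_def internal_def by auto
qed

lemma X_visible_adjacent:
  assumes "x \<in> V" "y \<in> V" "E x y" "x \<noteq> y"
  shows "X_visible V E X x y"
proof -
  have w: "walk V E [x, y]" using assms by (auto simp: walk_def nth_Cons split: nat.splits)
  have "shortest_path V E x y [x, y]"
    using gdist_pos[OF w _ _ assms(4)] by (intro shortest_pathI[OF w]) auto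
  then show ?thesis unfolding X_visible_def internal_def by auto
qed

lemma X_visible_via_common_neighbour:
  assumes "x \<in> V" "y \<in> V" "v \<in> V" "E x v" "E v y" "x \<noteq> y" "\<not> E x y" "v \<notin> X"
  shows "X_visible V E X x y"
proof -
  have w: "walk V E [x, v, y]" using assms by (auto simp: walk_def nth_Cons split: nat.splits)
  have "shortest_path V E x y [x, v, y]"
    using gdist_ge_2[OF w _ _ assms(6,7)] by (intro shortest_pathI[OF w]) auto
  then show ?thesis using assms(8) unfolding X_visible_def internal_def by auto
qed

lemma finite_card_tmv:
  assumes "finite V"
  shows "finite {card X | X. total_mutual_visibility_set V E X}"
proof -
  have "{card X | X. total_mutual_visibility_set V E X} \<subseteq> {..card V}"
    using assms by (auto simp: total_mutual_visibility_set_def intro: card_mono)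
  then show ?thesis by (rule finite_subset) simp
qed

lemma card_le_mu_t:
  assumes "finite V" "total_mutual_visibility_set V E X"
  shows "card X \<le> mu_t V E"
  unfolding mu_t_def using assms finite_card_tmv[OF assms(1)] by (intro Max_ge) auto

lemma mu_t_attained:
  assumes "finite V" "total_mutual_visibility_set V E X0"
  obtains X where "total_mutual_visibility_set V E X" "card X = mu_t V E"
proof -
  have "mu_t V E \<in> {card X | X. total_mutual_visibility_set V E X}"
    unfolding mu_t_def using assms finite_card_tmv[OF assms(1)] by (intro Max_in) auto
  then show ?thesis using that by auto
qed

lemma total_mutual_visibility_set_empty:
  assumes "connected_graph V E"
  shows "total_mutual_visibility_set V E {}"
  using assms shortest_path_exists
  unfolding connected_graph_def total_mutual_visibility_set_def X_visible_def by (metis empty_subsetI inf_bot_right)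

lemma non_neighbour_if_domination_number_ge_2:
  assumes "finite V" "2 \<le> domination_number V E" "g \<in> V"
  obtains z where "z \<in> V" "z \<noteq> g" "\<not> E g z"
proof (rule ccontr)
  assume "\<not> thesis"
  with that have "dominating_set V E {g}" using assms(3) by (auto simp: dominating_set_def)
  moreover have "finite {card D | D. dominating_set V E D}"
  proof -
    have "{card D | D. dominating_set V E D} \<subseteq> card ` Pow V" by (auto simp: dominating_set_def)
    then show ?thesis using assms(1) by (meson finite_Pow_iff finite_imageI finite_subset)
  qed
  ultimately have "domination_number V E \<le> card {g}"
    unfolding domination_number_def by (intro Min_le) blast+
  then show False using assms(2) by simp
qed

lemma neighbour_outside_tmv:
  assumes "finite V" "2 \<le> domination_number V E" "total_mutual_visibility_set V E X" "g \<in> V"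
  obtains v where "v \<in> V" "E g v" "v \<notin> X"
proof -
  obtain z where z: "z \<in> V" "z \<noteq> g" "\<not> E g z"
    using non_neighbour_if_domination_number_ge_2[OF assms(1,2,4)] .
  obtain P where P: "shortest_path V E g z P" "internal P \<inter> X = {}"
    using assms(3,4) z(1) unfolding total_mutual_visibility_set_def X_visible_def by blast
  have w: "walk V E P" "hd P = g" "last P = z" "length P = Suc (gdist V E g z)"
    using P(1) by (auto simp: shortest_path_def)
  have "3 \<le> length P" using gdist_ge_2[OF w(1-3) z(2)[symmetric] z(3)] w(4) by simp
  then have "P ! 1 \<in> internal P" "E (P ! 0) (P ! 1)" "P ! 1 \<in> V"
    using w(1) unfolding internal_conv_nth walk_def by (force, auto)
  moreover have "P ! 0 = g" using w(1,2) by (simp add: hd_conv_nth walk_def)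
  ultimately show ?thesis using that P(2) by blast
qed

subsection \<open>Walks in the lexicographic product\<close>

lemma walk_lex_lift:
  assumes "walk VG EG P" "hd P \<noteq> last P" "h \<in> VH" "h' \<in> VH" "h0 \<in> VH"
  obtains p where "walk (VG \<times> VH) (lex_edges EG EH) p" "map fst p = P"
    "hd p = (hd P, h)" "last p = (last P, h')" "internal p \<subseteq> internal P \<times> {h0}"
proof
  define p where
    "p = map (\<lambda>i. (P ! i, if i = 0 then h else if Suc i = length P then h' else h0)) [0..<length P]"
  have ne: "P \<noteq> []" using assms(1) by (simp add: walk_def)
  have len: "2 \<le> length P"
    using ne assms(2) by (cases P; cases "tl P") auto
  show "map fst p = P" unfolding p_def by (simp add: comp_def map_nth)
  show "hd p = (hd P, h)" unfolding p_def using ne len by (simp add: hd_map hd_conv_nth)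
  show "last p = (last P, h')" unfolding p_def using ne len by (simp add: last_map last_conv_nth)
  show "internal p \<subseteq> internal P \<times> {h0}"
    unfolding internal_conv_nth p_def by auto
  have "set p \<subseteq> VG \<times> VH"
    using assms(1,3-5) unfolding p_def walk_def by (auto dest: nth_mem)
  moreover have "\<forall>i. Suc i < length p \<longrightarrow> lex_edges EG EH (p ! i) (p ! Suc i)"
    using assms(1) unfolding walk_def lex_edges_def p_def by simp
  ultimately show "walk (VG \<times> VH) (lex_edges EG EH) p" using ne unfolding walk_def p_def by auto
qed

lemma walk_remdups_adj_map_fst:
  assumes "walk (VG \<times> VH) (lex_edges EG EH) p"
  shows "walk VG EG (remdups_adj (map fst p))"
proof -
  have p: "p \<noteq> []" "set p \<subseteq> VG \<times> VH" "successively (lex_edges EG EH) p"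
    using assms by (auto simp: walk_iff_successively)
  have "successively (\<lambda>a b. EG a b \<or> a = b) (map fst p)"
    unfolding successively_map using p(3) by (rule successively_mono) (auto simp: lex_edges_def)
  then have "successively (\<lambda>a b. EG a b \<or> a = b) (remdups_adj (map fst p))"
    by (subst successively_remdups_adj_iff) auto
  moreover have "successively (\<noteq>) (remdups_adj (map fst p))"
    using distinct_adj_remdups_adj unfolding distinct_adj_def by blast
  ultimately have "successively EG (remdups_adj (map fst p))"
    unfolding successively_conv_nth by blast
  then show ?thesis using p(1,2) by (auto simp: walk_iff_successively)
qed

lemma gdist_fst_less_length:
  assumes "walk (VG \<times> VH) (lex_edges EG EH) p"
  shows "gdist VG EG (fst (hd p)) (fst (last p)) < length (remdups_adj (map fst p))"
proof -
  have "p \<noteq> []" using assms by (simp add: walk_def)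
  then show ?thesis
    using gdist_less_length[OF walk_remdups_adj_map_fst[OF assms]] by (simp add: hd_map last_map)
qed

lemma gdist_lex_edges:
  assumes "walk VG EG P" "hd P = g" "last P = g'" "g \<noteq> g'" "h \<in> VH" "h' \<in> VH"
  shows "gdist (VG \<times> VH) (lex_edges EG EH) (g, h) (g', h') = gdist VG EG g g'"
proof (rule antisym)
  obtain Q where Q: "shortest_path VG EG g g' Q" using shortest_path_exists[OF assms(1-3)] .
  then obtain q where q: "walk (VG \<times> VH) (lex_edges EG EH) q" "map fst q = Q"
      "hd q = (g, h)" "last q = (g', h')"
    using walk_lex_lift[of VG EG Q h VH h' h] assms(4-6) unfolding shortest_path_def by metis
  show "gdist (VG \<times> VH) (lex_edges EG EH) (g, h) (g', h') \<le> gdist VG EG g g'"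
    using gdist_less_length[OF q(1,3,4)] Q q(2) unfolding shortest_path_def by auto
  obtain r where r: "shortest_path (VG \<times> VH) (lex_edges EG EH) (g, h) (g', h') r"
    using shortest_path_exists[OF q(1,3,4)] .
  then have "gdist VG EG g g' < length (remdups_adj (map fst r))"
    using gdist_fst_less_length[of VG VH EG EH r] by (simp add: shortest_path_def)
  also have "\<dots> \<le> length r" using remdups_adj_length[of "map fst r"] by simp
  finally show "gdist VG EG g g' \<le> gdist (VG \<times> VH) (lex_edges EG EH) (g, h) (g', h')"
    using r unfolding shortest_path_def by simp
qed

lemma shortest_path_lex_map_fst:
  assumes "shortest_path (VG \<times> VH) (lex_edges EG EH) x y p"
    and "walk VG EG P" "hd P = fst x" "last P = fst y" "fst x \<noteq> fst y"
  shows "shortest_path VG EG (fst x) (fst y) (map fst p)"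
proof -
  let ?q = "remdups_adj (map fst p)"
  have w: "walk (VG \<times> VH) (lex_edges EG EH) p" "hd p = x" "last p = y"
    using assms(1) by (auto simp: shortest_path_def)
  then have "x \<in> VG \<times> VH" "y \<in> VG \<times> VH" by (auto simp: walk_def)
  then have "length p = Suc (gdist VG EG (fst x) (fst y))"
    using assms(1) gdist_lex_edges[OF assms(2-5), of "snd x" VH "snd y" EH]
    by (auto simp: shortest_path_def)
  note p = w this
  \<comment> \<open>No two consecutive vertices of p share a fibre: dropping them would give a shorter G-walk.\<close>
  have "length p \<le> length ?q" using gdist_fst_less_length[OF p(1)] p by simp
  then have "?q = map fst p"
    using remdups_adj_length[of "map fst p"] distinct_adj_altdef distinct_adj_conv_length_remdups_adj
    by (metis le_antisym length_map)
  then have "walk VG EG (map fst p)" using walk_remdups_adj_map_fst[OF p(1)] by simp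
  moreover have "p \<noteq> []" using p(1) by (simp add: walk_def)
  ultimately show ?thesis using p by (intro shortest_pathI) (auto simp: hd_map last_map)
qed

lemma X_visible_lex_distinct_fibres:
  assumes "X_visible VG EG X g g'" "g \<noteq> g'" "h \<in> VH" "h' \<in> VH" "h0 \<in> VH"
    and "\<And>v. (v, h0) \<in> S \<Longrightarrow> v \<in> X"
  shows "X_visible (VG \<times> VH) (lex_edges EG EH) S (g, h) (g', h')"
proof -
  obtain P where P: "shortest_path VG EG g g' P" "internal P \<inter> X = {}"
    using assms(1) unfolding X_visible_def by blast
  then have Pw: "walk VG EG P" "hd P = g" "last P = g'" "length P = Suc (gdist VG EG g g')"
    by (auto simp: shortest_path_def)
  obtain p where p: "walk (VG \<times> VH) (lex_edges EG EH) p" "map fst p = P"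
      "hd p = (g, h)" "last p = (g', h')" "internal p \<subseteq> internal P \<times> {h0}"
    using walk_lex_lift[OF Pw(1) _ assms(3-5)] Pw(2,3) assms(2) by metis
  have "shortest_path (VG \<times> VH) (lex_edges EG EH) (g, h) (g', h') p"
    using p Pw gdist_lex_edges[OF Pw(1-3) assms(2-4)]
    by (intro shortest_pathI) (auto dest: arg_cong[of _ _ length])
  moreover have "internal p \<inter> S = {}" using p(5) P(2) assms(6) by blast
  ultimately show ?thesis unfolding X_visible_def by blast
qed

lemma X_visible_lex_same_fibre:
  assumes "graph VG EG" "g \<in> VG" "v \<in> VG" "EG g v" "h \<in> VH" "h' \<in> VH" "h0 \<in> VH"
    and "(v, h0) \<notin> S"
  shows "X_visible (VG \<times> VH) (lex_edges EG EH) S (g, h) (g, h')"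
proof -
  have irrefl: "\<not> EG g g" and sym: "EG v g" using assms(1,4) by (auto simp: graph_def)
  consider "h = h'" | "h \<noteq> h'" "EH h h'" | "h \<noteq> h'" "\<not> EH h h'" by blast
  then show ?thesis
  proof cases
    case 1
    then show ?thesis using assms(2,5) by (simp add: X_visible_refl)
  next
    case 2
    then show ?thesis using assms(2,5,6) by (intro X_visible_adjacent) (auto simp: lex_edges_def)
  next
    case 3
    have "lex_edges EG EH (g, h) (v, h0)" "lex_edges EG EH (v, h0) (g, h')"
      "\<not> lex_edges EG EH (g, h) (g, h')"
      using assms(4) sym irrefl 3(2) by (simp_all add: lex_edges_def)
    then show ?thesis
      using X_visible_via_common_neighbour[of "(g, h)" "VG \<times> VH" "(g, h')" "(v, h0)"] 3(1) assms(2,3,5-8)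
      by simp
  qed
qed

subsection \<open>The two bounds\<close>

lemma total_mutual_visibility_set_lex_layer:
  assumes "connected_graph VG EG" "2 \<le> domination_number VG EG"
    and "total_mutual_visibility_set VG EG X" "h0 \<in> VH"
  shows "total_mutual_visibility_set (VG \<times> VH) (lex_edges EG EH)
      (VG \<times> (VH - {h0}) \<union> X \<times> {h0})"
    (is "total_mutual_visibility_set _ _ ?S")
  unfolding total_mutual_visibility_set_def
proof (intro conjI ballI)
  have G: "graph VG EG" "finite VG" using assms(1) by (auto simp: connected_graph_def graph_def)
  show "?S \<subseteq> VG \<times> VH" using assms(3,4) by (auto simp: total_mutual_visibility_set_def)
  fix x y assume "x \<in> VG \<times> VH" "y \<in> VG \<times> VH"
  then obtain g h g' h' where x: "x = (g, h)" "g \<in> VG" "h \<in> VH"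
    and y: "y = (g', h')" "g' \<in> VG" "h' \<in> VH" by auto
  show "X_visible (VG \<times> VH) (lex_edges EG EH) ?S x y"
  proof (cases "g = g'")
    case True
    obtain v where v: "v \<in> VG" "EG g v" "v \<notin> X"
      using neighbour_outside_tmv[OF G(2) assms(2,3) x(2)] .
    then have "(v, h0) \<notin> ?S" by blast
    then show ?thesis
      using X_visible_lex_same_fibre[OF G(1) x(2) v(1,2) x(3) y(3) assms(4)] x y True by simp
  next
    case False
    have "X_visible VG EG X g g'"
      using assms(3) x y unfolding total_mutual_visibility_set_def by blast
    then have "X_visible (VG \<times> VH) (lex_edges EG EH) ?S (g, h) (g', h')"
      by (rule X_visible_lex_distinct_fibres[OF _ False x(3) y(3) assms(4)]) blast
    then show ?thesis using x y by simp
  qed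
qed

lemma card_lex_layer:
  assumes "finite VG" "finite VH" "X \<subseteq> VG" "h0 \<in> VH"
  shows "card (VG \<times> (VH - {h0}) \<union> X \<times> {h0}) = card VG * (card VH - 1) + card X"
proof -
  have "card (VG \<times> (VH - {h0}) \<union> X \<times> {h0}) = card (VG \<times> (VH - {h0})) + card (X \<times> {h0})"
    using assms by (intro card_Un_disjoint) (auto intro: finite_subset)
  then show ?thesis using assms by (simp add: card_cartesian_product)
qed

lemma total_mutual_visibility_set_full_fibres:
  assumes "connected_graph VG EG" "VH \<noteq> {}"
    and "total_mutual_visibility_set (VG \<times> VH) (lex_edges EG EH) S"
  shows "total_mutual_visibility_set VG EG {g \<in> VG. {g} \<times> VH \<subseteq> S}"
    (is "total_mutual_visibility_set _ _ ?X")
  unfolding total_mutual_visibility_set_def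
proof (intro conjI ballI)
  show "?X \<subseteq> VG" by auto
  fix g g' assume g: "g \<in> VG" "g' \<in> VG"
  show "X_visible VG EG ?X g g'"
  proof (cases "g = g'")
    case True
    then show ?thesis using g by (simp add: X_visible_refl)
  next
    case False
    obtain h where h: "h \<in> VH" using assms(2) by blast
    obtain p where p: "shortest_path (VG \<times> VH) (lex_edges EG EH) (g, h) (g', h) p"
        "internal p \<inter> S = {}"
      using assms(3) g h unfolding total_mutual_visibility_set_def X_visible_def by blast
    obtain P where "walk VG EG P" "hd P = g" "last P = g'"
      using assms(1) g unfolding connected_graph_def by blast
    then have "shortest_path VG EG g g' (map fst p)"
      using shortest_path_lex_map_fst[OF p(1)] False by simp
    moreover have "fst z \<notin> ?X" if "z \<in> internal p" for z
    proof -
      have "z \<in> VG \<times> VH" "z \<notin> S"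
        using that p internal_subset_set[of p] by (auto simp: shortest_path_def walk_def)
      then show ?thesis by (cases z) auto
    qed
    then have "internal (map fst p) \<inter> ?X = {}" by (auto simp: internal_map)
    ultimately show ?thesis unfolding X_visible_def by blast
  qed
qed

lemma card_le_full_fibres:
  assumes "finite VG" "finite VH" "S \<subseteq> VG \<times> VH"
  shows "card S \<le> card VG * (card VH - 1) + card {g \<in> VG. {g} \<times> VH \<subseteq> S}"
proof -
  have fibre: "card {h. (g, h) \<in> S} \<le> (card VH - 1) + of_bool ({g} \<times> VH \<subseteq> S)" for g
  proof (cases "{g} \<times> VH \<subseteq> S")
    case False
    then have "{h. (g, h) \<in> S} \<subset> VH" using assms(3) by blast
    then have "card {h. (g, h) \<in> S} < card VH" by (rule psubset_card_mono[OF assms(2)])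
    then show ?thesis using False by simp
  next
    case True
    have "{h. (g, h) \<in> S} \<subseteq> VH" using assms(3) by blast
    then have "card {h. (g, h) \<in> S} \<le> card VH" by (rule card_mono[OF assms(2)])
    then show ?thesis using True by simp
  qed
  have "S = (SIGMA g:VG. {h. (g, h) \<in> S})" using assms(3) by blast
  then have "card S = card (SIGMA g:VG. {h. (g, h) \<in> S})" by (rule arg_cong)
  also have "\<dots> = (\<Sum>g\<in>VG. card {h. (g, h) \<in> S})"
    using assms by (intro card_SigmaI) (auto intro: finite_subset[OF _ assms(2)])
  also have "\<dots> \<le> (\<Sum>g\<in>VG. (card VH - 1) + of_bool ({g} \<times> VH \<subseteq> S))"
    using fibre by (rule sum_mono)
  also have "\<dots> = card VG * (card VH - 1) + card {g \<in> VG. {g} \<times> VH \<subseteq> S}"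
    using assms(1) by (simp add: sum.distrib Int_def)
  finally show ?thesis .
qed

theorem theorem4p3:
  fixes VG :: "'a set" and EG :: "'a \<Rightarrow> 'a \<Rightarrow> bool"
    and VH :: "'b set" and EH :: "'b \<Rightarrow> 'b \<Rightarrow> bool"
  assumes "connected_graph VG EG"
    and "domination_number VG EG \<ge> 2"
    and "graph VH EH"
  shows "mu_t (lex_vertices VG VH) (lex_edges EG EH)
           = card VG * (card VH - 1) + mu_t VG EG"
proof -
  have fin: "finite VG" "finite VH" "VH \<noteq> {}" "finite (VG \<times> VH)"
    using assms(1,3) by (auto simp: connected_graph_def graph_def)
  obtain X where X: "total_mutual_visibility_set VG EG X" "card X = mu_t VG EG"
    using mu_t_attained[OF fin(1) total_mutual_visibility_set_empty[OF assms(1)]] .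
  obtain h0 where h0: "h0 \<in> VH" using fin(3) by blast
  have layer: "total_mutual_visibility_set (VG \<times> VH) (lex_edges EG EH)
      (VG \<times> (VH - {h0}) \<union> X \<times> {h0})"
    using total_mutual_visibility_set_lex_layer[OF assms(1,2) X(1) h0] .
  have XV: "X \<subseteq> VG" using X(1) by (simp add: total_mutual_visibility_set_def)
  have lower: "card VG * (card VH - 1) + mu_t VG EG \<le> mu_t (VG \<times> VH) (lex_edges EG EH)"
    using card_le_mu_t[OF fin(4) layer] card_lex_layer[OF fin(1,2) XV h0] X(2) by simp
  obtain S where S: "total_mutual_visibility_set (VG \<times> VH) (lex_edges EG EH) S"
      "card S = mu_t (VG \<times> VH) (lex_edges EG EH)"
    using mu_t_attained[OF fin(4) layer] .
  have SV: "S \<subseteq> VG \<times> VH" using S(1) by (simp add: total_mutual_visibility_set_def)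
  have "card S \<le> card VG * (card VH - 1) + mu_t VG EG"
    using card_le_full_fibres[OF fin(1,2) SV]
      card_le_mu_t[OF fin(1) total_mutual_visibility_set_full_fibres[OF assms(1) fin(3) S(1)]]
    by linarith
  then show ?thesis using lower S(2) unfolding lex_vertices_def by simp
qed

end
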